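(* Let $X_1, \dots, X_n$ be nonnegative random variables on a probability space $(\Omega, \mathcal{F}, \mathbb{P})$, let $\emptyset \neq \mathcal{S} \subseteq \{1, \dots, n\}$, and let $\mathbf{u} = (u_\lambda : \emptyset \neq \lambda \subseteq \mathcal{S})$ be real thresholds satisfying $u_\mu \geq u_\lambda$ for all nonempty $\mu \subsetneq \lambda \subseteq \mathcal{S}$. Then the collection $\{ B_\mu(\mathbf{u}) : \mu \subseteq \mathcal{S} \}$ forms a partition of $\Omega$ (the events are pairwise disjoint and their union is $\Omega$).
   Context: For $\mu \subseteq \mathcal{S}$ and $u \in \mathbb{R}$, $A_\mu(u) := \bigcap_{i \in \mu} \{X_i > u\}$, with $A_\emptyset(u) := \Omega$. For $\mu \subseteq \mathcal{S}$ (including $\mu = \emptyset$), $B_\mu(\mathbf{u}) := A_\mu(u_\mu) \cap \bigcap_{\mu \subsetneq \lambda \subseteq \mathcal{S}} \overline{A_\lambda(u_\lambda)}$, where $\overline{E}$ denotes the complement of an event $E$; in particular $B_\emptyset(\mathbf{u}) = \bigcap_{\emptyset \neq \lambda \subseteq \mathcal{S}} \overline{A_\lambda(u_\lambda)}$. *)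

theory Defs
  imports "HOL-Probability.Probability"
begin

definition evA :: "'a measure \<Rightarrow> (nat \<Rightarrow> 'a \<Rightarrow> real) \<Rightarrow> nat set \<Rightarrow> real \<Rightarrow> 'a set" where
  "evA M X \<mu> t = (if \<mu> = {} then space M else (\<Inter>i\<in>\<mu>. {\<omega> \<in> space M. X i \<omega> > t}))"

definition evB :: "'a measure \<Rightarrow> (nat \<Rightarrow> 'a \<Rightarrow> real) \<Rightarrow> nat set \<Rightarrow> (nat set \<Rightarrow> real) \<Rightarrow> nat set \<Rightarrow> 'a set" where
  "evB M X S u \<mu> = evA M X \<mu> (u \<mu>) \<inter>
     (\<Inter>L\<in>{L. \<mu> \<subset> L \<and> L \<subseteq> S}. space M - evA M X L (u L))"

end

theory Submission
  imports Defs
begin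

text \<open>Fix an outcome \<omega> and consider the family of all \<mu> \<subseteq> S with \<omega> \<in> A_\<mu>(u_\<mu>).
  It is finite and contains \<emptyset>, and \<omega> \<in> B_\<mu>(u) says exactly that \<mu> is a maximal
  member, so every \<omega> lies in some B_\<mu>(u). Monotonicity of the thresholds makes the
  family closed under unions of incomparable members, because
  A_\<mu>(u_\<mu>) \<inter> A_\<nu>(u_\<nu>) \<subseteq> A_(\<mu> \<union> \<nu>)(u_(\<mu> \<union> \<nu>)); hence the maximal member is unique.\<close>

lemma mem_evA: "\<omega> \<in> evA M X \<mu> t \<longleftrightarrow> \<omega> \<in> space M \<and> (\<forall>i\<in>\<mu>. t < X i \<omega>)"
  by (auto simp: evA_def)

lemma mem_evB:
  "\<omega> \<in> evB M X S u \<mu> \<longleftrightarrow>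
     \<omega> \<in> evA M X \<mu> (u \<mu>) \<and> (\<forall>L. \<mu> \<subset> L \<and> L \<subseteq> S \<longrightarrow> \<omega> \<notin> evA M X L (u L))"
  unfolding evB_def using mem_evA[of \<omega> M X \<mu>] by blast

lemma evA_Un:
  assumes "\<omega> \<in> evA M X \<mu> s" "\<omega> \<in> evA M X \<nu> t" "r \<le> s" "r \<le> t"
  shows "\<omega> \<in> evA M X (\<mu> \<union> \<nu>) r"
  using assms by (fastforce simp: mem_evA)

lemma disjoint_family_on_evB:
  assumes anti: "\<And>\<mu> L. \<mu> \<noteq> {} \<Longrightarrow> \<mu> \<subset> L \<Longrightarrow> L \<subseteq> S \<Longrightarrow> u L \<le> u \<mu>"
  shows "disjoint_family_on (evB M X S u) (Pow S)"
  unfolding disjoint_family_on_def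
proof (intro ballI impI equals0I)
  fix \<mu> \<nu> \<omega>
  assume \<mu>: "\<mu> \<in> Pow S" and \<nu>: "\<nu> \<in> Pow S" and "\<mu> \<noteq> \<nu>"
    and "\<omega> \<in> evB M X S u \<mu> \<inter> evB M X S u \<nu>"
  then have A\<mu>: "\<omega> \<in> evA M X \<mu> (u \<mu>)" and A\<nu>: "\<omega> \<in> evA M X \<nu> (u \<nu>)"
    and max\<mu>: "\<And>L. \<mu> \<subset> L \<Longrightarrow> L \<subseteq> S \<Longrightarrow> \<omega> \<notin> evA M X L (u L)"
    and max\<nu>: "\<And>L. \<nu> \<subset> L \<Longrightarrow> L \<subseteq> S \<Longrightarrow> \<omega> \<notin> evA M X L (u L)"
    by (simp_all add: mem_evB)
  consider "\<mu> \<subset> \<nu>" | "\<nu> \<subset> \<mu>" | "\<mu> \<noteq> {}" "\<nu> \<noteq> {}" "\<mu> \<subset> \<mu> \<union> \<nu>" "\<nu> \<subset> \<mu> \<union> \<nu>"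
    using \<open>\<mu> \<noteq> \<nu>\<close> by blast
  then show False
  proof cases
    case 1
    then show False using max\<mu> \<nu> A\<nu> by blast
  next
    case 2
    then show False using max\<nu> \<mu> A\<mu> by blast
  next
    case 3
    have S: "\<mu> \<union> \<nu> \<subseteq> S" using \<mu> \<nu> by auto
    have "\<omega> \<in> evA M X (\<mu> \<union> \<nu>) (u (\<mu> \<union> \<nu>))"
      using evA_Un[OF A\<mu> A\<nu> anti[OF 3(1) 3(3) S] anti[OF 3(2) 3(4) S]] .
    then show False using max\<mu>[OF 3(3) S] by blast
  qed
qed

lemma evB_subset_space: "evB M X S u \<mu> \<subseteq> space M"
  by (auto simp: evB_def evA_def split: if_split_asm)

lemma UN_evB_eq_space:
  assumes "finite S"
  shows "(\<Union>\<mu>\<in>Pow S. evB M X S u \<mu>) = space M"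
proof
  show "(\<Union>\<mu>\<in>Pow S. evB M X S u \<mu>) \<subseteq> space M"
    by (rule UN_least) (rule evB_subset_space)
next
  show "space M \<subseteq> (\<Union>\<mu>\<in>Pow S. evB M X S u \<mu>)"
  proof
    fix \<omega> assume \<omega>: "\<omega> \<in> space M"
    let ?F = "{\<mu> \<in> Pow S. \<omega> \<in> evA M X \<mu> (u \<mu>)}"
    have "finite ?F" using assms by simp
    moreover have "?F \<noteq> {}" using \<omega> by (auto simp: mem_evA)
    ultimately obtain \<mu> where "\<mu> \<in> ?F" and "\<forall>L\<in>?F. \<mu> \<subseteq> L \<longrightarrow> \<mu> = L"
      by (blast dest: finite_has_maximal)
    then have "\<omega> \<in> evA M X \<mu> (u \<mu>)"
      and "\<And>L. \<mu> \<subset> L \<Longrightarrow> L \<subseteq> S \<Longrightarrow> \<omega> \<notin> evA M X L (u L)"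
      by auto
    then have "\<omega> \<in> evB M X S u \<mu>" by (simp add: mem_evB)
    with \<open>\<mu> \<in> ?F\<close> show "\<omega> \<in> (\<Union>\<mu>\<in>Pow S. evB M X S u \<mu>)" by blast
  qed
qed

theorem lemma16:
  fixes M :: "'a measure" and X :: "nat \<Rightarrow> 'a \<Rightarrow> real" and n :: nat
    and S :: "nat set" and u :: "nat set \<Rightarrow> real"
  assumes "prob_space M"
    and "\<And>i. i \<in> {1..n} \<Longrightarrow> X i \<in> borel_measurable M"
    and "\<And>i \<omega>. i \<in> {1..n} \<Longrightarrow> \<omega> \<in> space M \<Longrightarrow> X i \<omega> \<ge> 0"
    and "S \<noteq> {}" and "S \<subseteq> {1..n}"
    and "\<And>\<mu> L. \<mu> \<noteq> {} \<Longrightarrow> \<mu> \<subset> L \<Longrightarrow> L \<subseteq> S \<Longrightarrow> u \<mu> \<ge> u L"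
  shows "disjoint_family_on (evB M X S u) (Pow S)
     \<and> (\<Union>\<mu>\<in>Pow S. evB M X S u \<mu>) = space M"
proof
  show "disjoint_family_on (evB M X S u) (Pow S)"
    using assms(6) by (rule disjoint_family_on_evB)
  have "finite S" using \<open>S \<subseteq> {1..n}\<close> finite_subset by blast
  then show "(\<Union>\<mu>\<in>Pow S. evB M X S u \<mu>) = space M"
    by (rule UN_evB_eq_space)
qed

end
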